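(* Let $G_0$ and $P$ be groups with a common subgroup $A$ (i.e. $A$ is a subgroup of both), where $P$ is finitely generated abelian. As $B$ varies among subgroups with $A\subset B\subset P$, the amalgamated products $G_0*_A B$ (amalgamated along the given inclusions of $A$) lie in only finitely many isomorphism classes. *)

theory Defs
  imports "HOL-Algebra.Algebra"
begin

text \<open>Amalgamated free product of groups G and H along homomorphisms
  f : K -> G and g : K -> H, constructed by the standard presentation:
  words in the letters of G and H modulo the congruence generated by
  deleting identity letters, multiplying adjacent letters from the same
  factor, and identifying f k with g k for k in K.\<close>

definition amalg_words ::
  "('a, 'm) monoid_scheme \<Rightarrow> ('b, 'n) monoid_scheme \<Rightarrow> ('a + 'b) list set" where
  "amalg_words G H = lists (Inl ` carrier G \<union> Inr ` carrier H)"

inductive_set amalg_rel ::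
  "('a, 'm) monoid_scheme \<Rightarrow> ('b, 'n) monoid_scheme \<Rightarrow> ('c, 'o) monoid_scheme
   \<Rightarrow> ('c \<Rightarrow> 'a) \<Rightarrow> ('c \<Rightarrow> 'b) \<Rightarrow> (('a + 'b) list \<times> ('a + 'b) list) set"
  for G H K f g where
  rrefl: "w \<in> amalg_words G H \<Longrightarrow> (w, w) \<in> amalg_rel G H K f g"
| rsym: "(u, v) \<in> amalg_rel G H K f g \<Longrightarrow> (v, u) \<in> amalg_rel G H K f g"
| rtrans: "(u, v) \<in> amalg_rel G H K f g \<Longrightarrow> (v, w) \<in> amalg_rel G H K f g
           \<Longrightarrow> (u, w) \<in> amalg_rel G H K f g"
| unitL: "u \<in> amalg_words G H \<Longrightarrow> v \<in> amalg_words G H \<Longrightarrow>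
          (u @ Inl \<one>\<^bsub>G\<^esub> # v, u @ v) \<in> amalg_rel G H K f g"
| unitR: "u \<in> amalg_words G H \<Longrightarrow> v \<in> amalg_words G H \<Longrightarrow>
          (u @ Inr \<one>\<^bsub>H\<^esub> # v, u @ v) \<in> amalg_rel G H K f g"
| mergeL: "u \<in> amalg_words G H \<Longrightarrow> v \<in> amalg_words G H \<Longrightarrow>
           x \<in> carrier G \<Longrightarrow> y \<in> carrier G \<Longrightarrow>
           (u @ Inl x # Inl y # v, u @ Inl (x \<otimes>\<^bsub>G\<^esub> y) # v) \<in> amalg_rel G H K f g"
| mergeR: "u \<in> amalg_words G H \<Longrightarrow> v \<in> amalg_words G H \<Longrightarrow>
           x \<in> carrier H \<Longrightarrow> y \<in> carrier H \<Longrightarrow>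
           (u @ Inr x # Inr y # v, u @ Inr (x \<otimes>\<^bsub>H\<^esub> y) # v) \<in> amalg_rel G H K f g"
| ident: "u \<in> amalg_words G H \<Longrightarrow> v \<in> amalg_words G H \<Longrightarrow> k \<in> carrier K \<Longrightarrow>
          (u @ Inl (f k) # v, u @ Inr (g k) # v) \<in> amalg_rel G H K f g"

definition amalg_prod ::
  "('a, 'm) monoid_scheme \<Rightarrow> ('b, 'n) monoid_scheme \<Rightarrow> ('c, 'o) monoid_scheme
   \<Rightarrow> ('c \<Rightarrow> 'a) \<Rightarrow> ('c \<Rightarrow> 'b) \<Rightarrow> ('a + 'b) list set monoid" where
  "amalg_prod G H K f g =
     \<lparr>carrier = amalg_words G H // amalg_rel G H K f g,
      monoid.mult = (\<lambda>U V. Image (amalg_rel G H K f g) {(SOME x. x \<in> U) @ (SOME y. y \<in> V)}),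
      monoid.one = Image (amalg_rel G H K f g) {[]}\<rparr>"

end

theory Submission
  imports Defs
begin

text \<open>Let \<open>K = \<psi>(A)\<close> and let \<open>C\<close> be the isolator of \<open>K\<close> in \<open>P\<close>, i.e. the elements having a
  positive power in \<open>K\<close>. As \<open>P\<close> is finitely generated abelian, \<open>C/K\<close> is finite, so only
  finitely many subgroups \<open>D\<close> lie between \<open>K\<close> and \<open>C\<close>. For \<open>K \<subseteq> B \<subseteq> P\<close> the subgroup
  \<open>D = B \<inter> C\<close> is isolated in \<open>B\<close>, so \<open>B/D\<close> is finitely generated and torsion-free, hence
  free: \<open>B = D \<oplus> \<int>\<^sup>r\<close> with \<open>r\<close> at most the number of generators of \<open>P\<close>. Two such \<open>B\<close> with the
  same pair \<open>(D, r)\<close> are isomorphic by an isomorphism fixing \<open>D \<supseteq> K\<close> pointwise, and such an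
  isomorphism of the second factors induces an isomorphism of the amalgamated products. One
  representative \<open>B\<close> for each of the finitely many pairs \<open>(D, r)\<close> therefore suffices.\<close>

text \<open>\<open>adjoin G Y a\<close> is \<open>Y\<langle>a\<rangle> = Y \<cdot> \<langle>a\<rangle>\<close>. \<open>free_over G D B r\<close> says
  \<open>B = D\<langle>f\<^sub>0\<rangle>\<cdots>\<langle>f\<^sub>r\<^sub>-\<^sub>1\<rangle>\<close> with each \<open>f\<^sub>i\<close> of infinite order modulo \<open>D\<langle>f\<^sub>0\<rangle>\<cdots>\<langle>f\<^sub>i\<^sub>-\<^sub>1\<rangle>\<close>,
  i.e. \<open>B \<cong> D \<times> \<int>\<^sup>r\<close> over \<open>D\<close>.\<close>

definition adjoin :: "('b, 'n) monoid_scheme \<Rightarrow> 'b set \<Rightarrow> 'b \<Rightarrow> 'b set" where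
  "adjoin G Y a = {x \<otimes>\<^bsub>G\<^esub> a [^]\<^bsub>G\<^esub> t | x t::int. x \<in> Y}"

fun adjoin_seq :: "('b, 'n) monoid_scheme \<Rightarrow> 'b set \<Rightarrow> (nat \<Rightarrow> 'b) \<Rightarrow> nat \<Rightarrow> 'b set" where
  "adjoin_seq G D f 0 = D"
| "adjoin_seq G D f (Suc m) = adjoin G (adjoin_seq G D f m) (f m)"

fun independent_seq :: "('b, 'n) monoid_scheme \<Rightarrow> 'b set \<Rightarrow> (nat \<Rightarrow> 'b) \<Rightarrow> nat \<Rightarrow> bool" where
  "independent_seq G D f 0 = True"
| "independent_seq G D f (Suc m) \<longleftrightarrow>
     independent_seq G D f m \<and> (\<forall>t::int. f m [^]\<^bsub>G\<^esub> t \<in> adjoin_seq G D f m \<longrightarrow> t = 0)"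

definition free_over :: "('b, 'n) monoid_scheme \<Rightarrow> 'b set \<Rightarrow> 'b set \<Rightarrow> nat \<Rightarrow> bool" where
  "free_over G D B r \<longleftrightarrow>
     (\<exists>f. (\<forall>i<r. f i \<in> B) \<and> B = adjoin_seq G D f r \<and> independent_seq G D f r)"

definition adjoin_ext ::
  "('b, 'n) monoid_scheme \<Rightarrow> 'b set \<Rightarrow> 'b \<Rightarrow> 'b \<Rightarrow> ('b \<Rightarrow> 'b) \<Rightarrow> 'b \<Rightarrow> 'b" where
  "adjoin_ext G Y a a' h u =
     (THE v. \<exists>x (t::int). x \<in> Y \<and> u = x \<otimes>\<^bsub>G\<^esub> a [^]\<^bsub>G\<^esub> t \<and> v = h x \<otimes>\<^bsub>G\<^esub> a' [^]\<^bsub>G\<^esub> t)"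

definition isolated :: "('b, 'n) monoid_scheme \<Rightarrow> 'b set \<Rightarrow> 'b set \<Rightarrow> bool" where
  "isolated G D W \<longleftrightarrow> (\<forall>x\<in>W. \<forall>j::nat. 0 < j \<longrightarrow> x [^]\<^bsub>G\<^esub> j \<in> D \<longrightarrow> x \<in> D)"

definition isolator :: "('b, 'n) monoid_scheme \<Rightarrow> 'b set \<Rightarrow> 'b set \<Rightarrow> 'b set" where
  "isolator G Z Y = {x \<in> Y. \<exists>j::nat. 0 < j \<and> x [^]\<^bsub>G\<^esub> j \<in> Z}"

lemma adjoin_seq_cong: "(\<And>i. i < m \<Longrightarrow> f i = g i) \<Longrightarrow> adjoin_seq G D f m = adjoin_seq G D g m"
  by (induction m) auto

lemma independent_seq_cong:
  "(\<And>i. i < m \<Longrightarrow> f i = g i) \<Longrightarrow> independent_seq G D f m = independent_seq G D g m"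
proof (induction m)
  case (Suc m)
  then show ?case using adjoin_seq_cong[of m f g G D] by auto
qed simp

lemma adjoin_seq_fun_upd [simp]: "adjoin_seq G D (f(m := a)) m = adjoin_seq G D f m"
  by (rule adjoin_seq_cong) simp

lemma independent_seq_fun_upd [simp]: "independent_seq G D (f(m := a)) m = independent_seq G D f m"
  by (rule independent_seq_cong) simp

lemma isolated_mono: "isolated G D W \<Longrightarrow> W' \<subseteq> W \<Longrightarrow> isolated G D W'"
  unfolding isolated_def by blast

lemma isolator_subset: "isolator G Z Y \<subseteq> Y"
  unfolding isolator_def by blast

lemma iso_carrier_update_iff:
  fixes G :: "('a, 'b) monoid_scheme"
  shows "h \<in> iso (G\<lparr>carrier := Y\<rparr>) (G\<lparr>carrier := Y'\<rparr>) \<longleftrightarrow>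
     bij_betw h Y Y' \<and> (\<forall>x\<in>Y. \<forall>y\<in>Y. h (x \<otimes>\<^bsub>G\<^esub> y) = h x \<otimes>\<^bsub>G\<^esub> h y)"
  by (auto simp: iso_def hom_def bij_betw_def)

lemma int_set_has_dvd_generator:
  fixes I :: "int set"
  assumes "0 \<in> I" and closed: "\<And>s t q. s \<in> I \<Longrightarrow> t \<in> I \<Longrightarrow> s - q * t \<in> I"
  obtains d where "d \<in> I" "\<And>t. t \<in> I \<Longrightarrow> d dvd t"
proof (cases "I \<subseteq> {0}")
  case True
  then show ?thesis using that assms(1) by blast
next
  case False
  then obtain t0 where t0: "t0 \<in> I" "t0 \<noteq> 0" by blast
  have "\<exists>k::nat. 0 < k \<and> int k \<in> I"
  proof (cases "0 < t0")
    case True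
    then show ?thesis using t0(1) by (intro exI[of _ "nat t0"]) simp
  next
    case False
    then show ?thesis using t0 closed[OF assms(1) t0(1), of 1] by (intro exI[of _ "nat (- t0)"]) simp
  qed
  define d where "d = (LEAST k::nat. 0 < k \<and> int k \<in> I)"
  have d: "0 < d" "int d \<in> I"
    using LeastI_ex[OF \<open>\<exists>k::nat. 0 < k \<and> int k \<in> I\<close>] unfolding d_def by auto
  have "int d dvd t" if "t \<in> I" for t
  proof -
    let ?r = "t mod int d"
    have "?r \<in> I"
      using closed[OF that d(2), of "t div int d"] by (simp add: minus_div_mult_eq_mod)
    moreover have "0 \<le> ?r" "?r < int d" using d(1) by simp_all
    moreover have "d \<le> nat ?r" if "0 < ?r" "?r \<in> I"
      using that unfolding d_def by (intro Least_le) simp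
    ultimately have "?r = 0" by linarith
    then show ?thesis by (simp add: dvd_eq_mod_eq_0)
  qed
  then show ?thesis using that d(2) by blast
qed

lemma finite_representatives:
  assumes "finite T" and "\<And>x. x \<in> S \<Longrightarrow> \<exists>t\<in>T. Q x t"
    and "\<And>x y t. x \<in> S \<Longrightarrow> y \<in> S \<Longrightarrow> Q x t \<Longrightarrow> Q y t \<Longrightarrow> R x y"
  shows "\<exists>F. finite F \<and> F \<subseteq> S \<and> (\<forall>x\<in>S. \<exists>y\<in>F. R x y)"
proof -
  define rep where "rep t = (SOME x. x \<in> S \<and> Q x t)" for t
  have rep: "rep t \<in> S \<and> Q (rep t) t" if "x \<in> S" "Q x t" for x t
    unfolding rep_def using someI[of "\<lambda>x. x \<in> S \<and> Q x t" x] that by simp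
  let ?F = "rep ` {t\<in>T. \<exists>x\<in>S. Q x t}"
  have "finite ?F" using assms(1) by simp
  moreover have "?F \<subseteq> S" using rep by blast
  moreover have "\<exists>y\<in>?F. R x y" if x: "x \<in> S" for x
  proof -
    obtain t where t: "t \<in> T" "Q x t" using assms(2) x by blast
    then have "rep t \<in> ?F" using x by blast
    moreover have "R x (rep t)" using assms(3)[OF x _ t(2)] rep[OF x t(2)] by blast
    ultimately show ?thesis by blast
  qed
  ultimately show ?thesis by (intro exI[of _ ?F]) blast
qed

context comm_group
begin

section \<open>Adjoining cyclic subgroups\<close>

lemma adjoinI: "x \<in> Y \<Longrightarrow> x \<otimes> a [^] (t::int) \<in> adjoin G Y a"
  unfolding adjoin_def by blast

lemma adjoinE:
  assumes "u \<in> adjoin G Y a"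
  obtains x and t :: int where "u = x \<otimes> a [^] t" "x \<in> Y"
  using assms unfolding adjoin_def by blast

lemma adjoin_subgroup:
  assumes "subgroup Y G" "a \<in> carrier G"
  shows "subgroup (adjoin G Y a) G"
proof (rule subgroupI)
  interpret Y: subgroup Y G by fact
  show "adjoin G Y a \<subseteq> carrier G"
    using assms(2) by (auto elim: adjoinE)
  show "adjoin G Y a \<noteq> {}"
    using adjoinI[OF Y.one_closed] by blast
  fix u v assume u: "u \<in> adjoin G Y a" and v: "v \<in> adjoin G Y a"
  from u obtain x and t :: int where x: "u = x \<otimes> a [^] t" "x \<in> Y" by (rule adjoinE)
  from v obtain y and s :: int where y: "v = y \<otimes> a [^] s" "y \<in> Y" by (rule adjoinE)
  have "inv u = inv x \<otimes> a [^] (-t)"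
    using x assms by (simp add: inv_mult int_pow_neg m_comm)
  then show "inv u \<in> adjoin G Y a"
    using adjoinI[OF Y.m_inv_closed[OF x(2)]] by simp
  have "u \<otimes> v = (x \<otimes> y) \<otimes> a [^] (t + s)"
    using x y assms by (simp add: int_pow_mult m_ac)
  then show "u \<otimes> v \<in> adjoin G Y a"
    using adjoinI[OF Y.m_closed[OF x(2) y(2)]] by simp
qed

lemma adjoin_superset: "Y \<subseteq> carrier G \<Longrightarrow> Y \<subseteq> adjoin G Y a"
  using adjoinI[of _ Y a 0] by force

lemma adjoin_gen: "subgroup Y G \<Longrightarrow> a \<in> carrier G \<Longrightarrow> a \<in> adjoin G Y a"
  using adjoinI[OF subgroup.one_closed, of Y G a 1] by simp

lemma adjoin_least: "subgroup Y G \<Longrightarrow> Y0 \<subseteq> Y \<Longrightarrow> a \<in> Y \<Longrightarrow> adjoin G Y0 a \<subseteq> Y"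
  by (auto elim!: adjoinE intro!: subgroup.m_closed subgroup_int_pow_closed)

lemma adjoin_mono: "Y \<subseteq> Y' \<Longrightarrow> adjoin G Y a \<subseteq> adjoin G Y' a"
  unfolding adjoin_def by blast

lemma adjoin_one: "Y \<subseteq> carrier G \<Longrightarrow> adjoin G Y \<one> = Y"
  unfolding adjoin_def by force

lemma adjoin_eq_self: "subgroup Y G \<Longrightarrow> a \<in> Y \<Longrightarrow> adjoin G Y a = Y"
  using adjoin_least[of Y Y a] adjoin_superset[OF subgroup.subset, of Y a] by blast

lemma adjoin_seq_subgroup:
  "subgroup D G \<Longrightarrow> (\<And>i. i < m \<Longrightarrow> f i \<in> carrier G) \<Longrightarrow> subgroup (adjoin_seq G D f m) G"
  by (induction m) (auto intro: adjoin_subgroup)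

lemma adjoin_seq_superset:
  assumes "subgroup D G" "\<And>i. i < m \<Longrightarrow> f i \<in> carrier G"
  shows "D \<subseteq> adjoin_seq G D f m"
  using assms
proof (induction m)
  case (Suc m)
  then show ?case
    using adjoin_superset[OF subgroup.subset[OF adjoin_seq_subgroup[of D m f]]] by fastforce
qed simp

lemma adjoin_seq_gen:
  assumes "subgroup D G" "\<And>i. i < m \<Longrightarrow> f i \<in> carrier G" "i < m"
  shows "f i \<in> adjoin_seq G D f m"
  using assms
proof (induction m)
  case (Suc m)
  have sub: "subgroup (adjoin_seq G D f m) G"
    using Suc.prems by (intro adjoin_seq_subgroup) auto
  show ?case
  proof (cases "i = m")
    case True
    then show ?thesis using adjoin_gen[OF sub] Suc.prems(2) by simp
  next
    case False
    then show ?thesis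
      using Suc adjoin_superset[OF subgroup.subset[OF sub], of "f m"] by auto
  qed
qed simp

lemma adjoin_seq_least:
  "subgroup Y G \<Longrightarrow> D \<subseteq> Y \<Longrightarrow> (\<And>i. i < m \<Longrightarrow> f i \<in> Y) \<Longrightarrow> adjoin_seq G D f m \<subseteq> Y"
proof (induction m)
  case (Suc m)
  then show ?case using adjoin_least[of Y "adjoin_seq G D f m" "f m"] by simp
qed simp

lemma adjoin_seq_mono: "D \<subseteq> D' \<Longrightarrow> adjoin_seq G D f m \<subseteq> adjoin_seq G D' f m"
  by (induction m) (auto dest: adjoin_mono[THEN subsetD])

lemma generate_eq_adjoin_seq:
  assumes "finite S" "S \<subseteq> carrier G"
  obtains s n where "\<forall>i<n. s i \<in> S" "generate G S = adjoin_seq G {\<one>} s n"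
proof -
  obtain xs where xs: "set xs = S" using finite_list[OF assms(1)] by blast
  let ?s = "(!) xs" and ?n = "length xs"
  have sS: "\<forall>i<?n. ?s i \<in> S" using xs by auto
  then have sc: "\<And>i. i < ?n \<Longrightarrow> ?s i \<in> carrier G" using assms(2) by blast
  have "generate G S \<subseteq> adjoin_seq G {\<one>} ?s ?n"
  proof (rule generate_subgroup_incl)
    show "subgroup (adjoin_seq G {\<one>} ?s ?n) G"
      using adjoin_seq_subgroup[OF triv_subgroup] sc by blast
    show "S \<subseteq> adjoin_seq G {\<one>} ?s ?n"
      using adjoin_seq_gen[OF triv_subgroup] sc xs by (auto simp: in_set_conv_nth)
  qed
  moreover have "adjoin_seq G {\<one>} ?s ?n \<subseteq> generate G S"
    using sS by (intro adjoin_seq_least generate_is_subgroup assms(2)) (auto intro: generate.incl generate.one)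
  ultimately show ?thesis using that sS by blast
qed

lemma mult_int_pow_combine:
  fixes s t q :: int
  assumes "x \<in> carrier G" "y \<in> carrier G" "a \<in> carrier G"
  shows "(x \<otimes> a [^] s) \<otimes> (y \<otimes> a [^] t) [^] (- q) = (x \<otimes> y [^] (- q)) \<otimes> a [^] (s - q * t)"
proof -
  have "a [^] (s - q * t) = a [^] s \<otimes> a [^] (t * - q)"
    using assms(3) int_pow_mult[of a s "t * - q"] by (simp add: mult.commute)
  then show ?thesis using assms by (simp add: int_pow_distrib int_pow_pow m_ac)
qed

text \<open>A subgroup of \<open>T\<langle>a\<rangle>\<close> is \<open>(B \<inter> T)\<langle>e\<rangle>\<close>: the exponents of \<open>a\<close> occurring in \<open>B\<close>
  form a subgroup \<open>d\<int>\<close> of \<open>\<int>\<close>, and \<open>e\<close> is an element of \<open>B\<close> with exponent \<open>d\<close>.\<close>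

lemma subgroup_of_adjoin:
  assumes T: "subgroup T G" and a: "a \<in> carrier G" and B: "subgroup B G" "B \<subseteq> adjoin G T a"
  obtains e where "e \<in> B" "B = adjoin G (B \<inter> T) e"
proof -
  interpret T: subgroup T G by (rule T)
  interpret B: subgroup B G by (rule B(1))
  note combine = mult_int_pow_combine[OF _ _ a]
  define I where "I = {t :: int. \<exists>x\<in>T. x \<otimes> a [^] t \<in> B}"
  have "0 \<in> I" unfolding I_def using T.one_closed B.one_closed a by (intro CollectI bexI[of _ \<one>]) simp_all
  moreover have "s - q * t \<in> I" if st: "s \<in> I" "t \<in> I" for s t q
  proof -
    obtain x y where xy: "x \<in> T" "x \<otimes> a [^] s \<in> B" "y \<in> T" "y \<otimes> a [^] t \<in> B"
      using st unfolding I_def by blast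
    have "x \<otimes> y [^] (- q) \<in> T"
      using T.m_closed[OF xy(1) subgroup_int_pow_closed[OF T xy(3)]] .
    moreover have "(x \<otimes> y [^] (- q)) \<otimes> a [^] (s - q * t) \<in> B"
      using B.m_closed[OF xy(2) subgroup_int_pow_closed[OF B(1) xy(4), of "- q"]]
      unfolding combine[OF T.subset[THEN subsetD, OF xy(1)] T.subset[THEN subsetD, OF xy(3)]] .
    ultimately show ?thesis unfolding I_def by blast
  qed
  ultimately obtain d where d: "d \<in> I" "\<And>t. t \<in> I \<Longrightarrow> d dvd t"
    by (rule int_set_has_dvd_generator) auto
  then obtain x0 where x0: "x0 \<in> T" "x0 \<otimes> a [^] d \<in> B" unfolding I_def by blast
  define e where "e = x0 \<otimes> a [^] d"
  have eB: "e \<in> B" using x0 unfolding e_def by simp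
  have "B \<subseteq> adjoin G (B \<inter> T) e"
  proof
    fix y assume y: "y \<in> B"
    then obtain x and t :: int where x: "y = x \<otimes> a [^] t" "x \<in> T"
      using B(2) by (blast elim: adjoinE)
    then have "t \<in> I" unfolding I_def using y by blast
    then obtain q where q: "t = d * q" using d(2) by blast
    have "y \<otimes> e [^] (- q) = x \<otimes> x0 [^] (- q)"
      unfolding x(1) e_def combine[OF T.subset[THEN subsetD, OF x(2)] T.subset[THEN subsetD, OF x0(1)]]
      using x(2) x0(1) T.subset by (simp add: q mult.commute)
    moreover have "x \<otimes> x0 [^] (- q) \<in> T"
      using T.m_closed[OF x(2) subgroup_int_pow_closed[OF T x0(1)]] .
    moreover have "y \<otimes> e [^] (- q) \<in> B"
      using B.m_closed[OF y subgroup_int_pow_closed[OF B(1) eB]] .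
    ultimately have "y \<otimes> e [^] (- q) \<in> B \<inter> T" by simp
    moreover have "y = (y \<otimes> e [^] (- q)) \<otimes> e [^] q"
      using y eB B.subset by (simp add: m_assoc int_pow_neg)
    ultimately show "y \<in> adjoin G (B \<inter> T) e" by (metis adjoinI)
  qed
  moreover have "adjoin G (B \<inter> T) e \<subseteq> B" using adjoin_least[OF B(1) _ eB] by blast
  ultimately show ?thesis using that eB by blast
qed

lemma subgroup_of_adjoin_seq:
  assumes "\<And>i. i < n \<Longrightarrow> s i \<in> carrier G" "subgroup B G" "B \<subseteq> adjoin_seq G {\<one>} s n"
  obtains b where "\<forall>i<n. b i \<in> B" "B = adjoin_seq G {\<one>} b n"
  using assms
proof (induction n arbitrary: B thesis)
  case 0
  then have "B = {\<one>}" using subgroup.one_closed by fastforce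
  then show ?case using "0.prems"(1) by simp
next
  case (Suc n)
  have T: "subgroup (adjoin_seq G {\<one>} s n) G"
    using Suc.prems(2) by (intro adjoin_seq_subgroup triv_subgroup) auto
  obtain e where e: "e \<in> B" "B = adjoin G (B \<inter> adjoin_seq G {\<one>} s n) e"
    using subgroup_of_adjoin[OF T _ Suc.prems(3)] Suc.prems(2,4) by auto
  obtain b where b: "\<forall>i<n. b i \<in> B \<inter> adjoin_seq G {\<one>} s n"
    "B \<inter> adjoin_seq G {\<one>} s n = adjoin_seq G {\<one>} b n"
    using Suc.IH[of "B \<inter> adjoin_seq G {\<one>} s n"] Suc.prems(2,3) T
    by (metis inf_le2 less_SucI subgroups_Inter_pair)
  have "B = adjoin_seq G {\<one>} (b(n := e)) (Suc n)" using e b(2) by simp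
  moreover have "\<forall>i<Suc n. (b(n := e)) i \<in> B" using b(1) e(1) by (simp add: less_Suc_eq)
  ultimately show ?case using Suc.prems(1) by blast
qed

section \<open>Isolators\<close>

lemma isolator_subgroup:
  assumes Z: "subgroup Z G" and Y: "subgroup Y G"
  shows "subgroup (isolator G Z Y) G"
proof (rule subgroupI)
  interpret Z: subgroup Z G by (rule Z)
  interpret Y: subgroup Y G by (rule Y)
  show "isolator G Z Y \<subseteq> carrier G" unfolding isolator_def using Y.subset by blast
  have "\<one> \<in> isolator G Z Y" unfolding isolator_def by (auto intro!: exI[of _ 1])
  then show "isolator G Z Y \<noteq> {}" by blast
  fix x y assume "x \<in> isolator G Z Y" "y \<in> isolator G Z Y"
  then obtain j k :: nat where x: "x \<in> Y" "0 < j" "x [^] j \<in> Z" and y: "y \<in> Y" "0 < k" "y [^] k \<in> Z"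
    unfolding isolator_def by blast
  have xc: "x \<in> carrier G" and yc: "y \<in> carrier G" using x y Y.subset by auto
  have "inv x [^] j = inv (x [^] j)" using xc by (simp add: nat_pow_inv)
  then show "inv x \<in> isolator G Z Y" unfolding isolator_def using x by auto
  have "(x \<otimes> y) [^] (j * k) = (x [^] j) [^] k \<otimes> (y [^] k) [^] j"
    using xc yc by (simp add: pow_mult_distrib m_comm nat_pow_pow mult.commute)
  also have "\<dots> \<in> Z"
    using x(3) y(3) by (metis Z.m_closed int_pow_int subgroup_int_pow_closed[OF Z])
  finally have "(x \<otimes> y) [^] (j * k) \<in> Z" .
  moreover have "0 < j * k" using x y by simp
  ultimately show "x \<otimes> y \<in> isolator G Z Y" unfolding isolator_def using x y by blast
qed

lemma subset_isolator: "Z \<subseteq> carrier G \<Longrightarrow> Z \<inter> Y \<subseteq> isolator G Z Y"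
  unfolding isolator_def by (auto intro!: exI[of _ 1])

lemma isolated_isolator:
  assumes "Y \<subseteq> carrier G"
  shows "isolated G (isolator G Z Y) Y"
  unfolding isolated_def
proof (intro ballI allI impI)
  fix x and j :: nat assume x: "x \<in> Y" "0 < j" "x [^] j \<in> isolator G Z Y"
  then obtain k :: nat where "0 < k" "(x [^] j) [^] k \<in> Z" unfolding isolator_def by blast
  then have "0 < j * k" "x [^] (j * k) \<in> Z" using x assms by (auto simp: nat_pow_pow)
  then show "x \<in> isolator G Z Y" unfolding isolator_def using x(1) by blast
qed

text \<open>The torsion of \<open>\<langle>c\<^sub>0, \<dots>, c\<^sub>n\<^sub>-\<^sub>1\<rangle>\<close> modulo \<open>K\<close> gives a finite set of coset
  representatives: the products \<open>c\<^sub>0\<^bsup>r\<^sub>0\<^esup> \<cdots> c\<^sub>n\<^sub>-\<^sub>1\<^bsup>r\<^sub>n\<^sub>-\<^sub>1\<^esup>\<close> with \<open>0 \<le> r\<^sub>i < m\<^sub>i\<close>.\<close>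

lemma adjoin_seq_torsion_over_subgroup:
  assumes K: "subgroup K G" and c: "\<And>i. i < n \<Longrightarrow> c i \<in> carrier G"
    and tors: "\<And>i. i < n \<Longrightarrow> \<exists>j::nat. 0 < j \<and> c i [^] j \<in> K"
  obtains Y where "finite Y" "Y \<subseteq> carrier G" "adjoin_seq G {\<one>} c n \<subseteq> K <#> Y"
  using c tors
proof (induction n arbitrary: thesis)
  case 0
  then show ?case using subgroup.one_closed[OF K] by (force simp: set_mult_def)
next
  case (Suc n)
  interpret K: subgroup K G by (rule K)
  obtain Y where Y: "finite Y" "Y \<subseteq> carrier G" "adjoin_seq G {\<one>} c n \<subseteq> K <#> Y"
    using Suc.IH Suc.prems(2,3) by (metis less_SucI)
  obtain m :: nat where m: "0 < m" "c n [^] m \<in> K" using Suc.prems(3)[of n] by blast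
  have cn: "c n \<in> carrier G" using Suc.prems(2) by simp
  define Y' where "Y' = (\<lambda>(y, r). y \<otimes> c n [^] (r::int)) ` (Y \<times> {0..<int m})"
  have "adjoin_seq G {\<one>} c (Suc n) \<subseteq> K <#> Y'"
  proof
    fix x assume "x \<in> adjoin_seq G {\<one>} c (Suc n)"
    then obtain z and t :: int where x: "x = z \<otimes> c n [^] t" "z \<in> adjoin_seq G {\<one>} c n"
      by (auto elim: adjoinE)
    then obtain k y where ky: "k \<in> K" "y \<in> Y" "z = k \<otimes> y"
      using Y(3) unfolding set_mult_def by blast
    define q r where "q = t div int m" and "r = t mod int m"
    have yc: "y \<in> carrier G" and kc: "k \<in> carrier G" using ky Y(2) K.subset by auto
    have "t = int m * q + r" unfolding q_def r_def by simp
    then have "c n [^] t = (c n [^] m) [^] q \<otimes> c n [^] r"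
      using cn by (simp add: int_pow_mult int_pow_pow flip: int_pow_int)
    then have "x = (k \<otimes> (c n [^] m) [^] q) \<otimes> (y \<otimes> c n [^] r)"
      using x(1) ky(3) yc kc cn by (simp add: m_ac)
    moreover have "k \<otimes> (c n [^] m) [^] q \<in> K"
      using ky(1) m(2) by (simp add: subgroup_int_pow_closed[OF K])
    moreover have "y \<otimes> c n [^] r \<in> Y'"
      unfolding Y'_def r_def using ky(2) m(1) by (intro image_eqI[of _ _ "(y, t mod int m)"]) auto
    ultimately show "x \<in> K <#> Y'" unfolding set_mult_def by blast
  qed
  moreover have "finite Y'" "Y' \<subseteq> carrier G" unfolding Y'_def using Y(1,2) cn by auto
  ultimately show ?case using Suc.prems(1) by blast
qed

lemma finite_subgroups_between:
  assumes K: "subgroup K G" and Y: "finite Y" "Y \<subseteq> carrier G" and C: "C \<subseteq> K <#> Y"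
  shows "finite {D. subgroup D G \<and> K \<subseteq> D \<and> D \<subseteq> C}"
proof -
  have "{D. subgroup D G \<and> K \<subseteq> D \<and> D \<subseteq> C} \<subseteq> (\<lambda>Y'. K <#> Y') ` Pow Y"
  proof
    fix D assume "D \<in> {D. subgroup D G \<and> K \<subseteq> D \<and> D \<subseteq> C}"
    then have D: "subgroup D G" "K \<subseteq> D" "D \<subseteq> C" by auto
    interpret D: subgroup D G by (rule D(1))
    have "D \<subseteq> K <#> (Y \<inter> D)"
    proof
      fix x assume x: "x \<in> D"
      then obtain k y where ky: "k \<in> K" "y \<in> Y" "x = k \<otimes> y"
        using C D(3) unfolding set_mult_def by blast
      have "k \<in> carrier G" "y \<in> carrier G" using ky Y(2) subgroup.subset[OF K] by auto
      then have "y = inv k \<otimes> x" using ky(3) by (simp add: m_assoc[symmetric])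
      then have "y \<in> D" using x ky(1) D(2) by auto
      then show "x \<in> K <#> (Y \<inter> D)" using ky unfolding set_mult_def by blast
    qed
    moreover have "K <#> (Y \<inter> D) \<subseteq> D"
      using D(2) unfolding set_mult_def by auto
    ultimately show "D \<in> (\<lambda>Y'. K <#> Y') ` Pow Y" by blast
  qed
  then show ?thesis using Y(1) by (meson finite_Pow_iff finite_imageI finite_subset)
qed

lemma finite_subgroups_below_isolator:
  assumes s: "\<And>i. i < n \<Longrightarrow> s i \<in> carrier G" and gen: "carrier G = adjoin_seq G {\<one>} s n"
    and K: "subgroup K G"
  shows "finite {D. subgroup D G \<and> K \<subseteq> D \<and> D \<subseteq> isolator G K (carrier G)}"
proof -
  let ?C = "isolator G K (carrier G)"
  have C: "subgroup ?C G" by (rule isolator_subgroup[OF K subgroup_self])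
  have "?C \<subseteq> adjoin_seq G {\<one>} s n" using gen subgroup.subset[OF C] by simp
  then obtain c where c: "\<forall>i<n. c i \<in> ?C" "?C = adjoin_seq G {\<one>} c n"
    using subgroup_of_adjoin_seq[of n s, OF s C] by blast
  have "c i \<in> carrier G" "\<exists>j::nat. 0 < j \<and> c i [^] j \<in> K" if "i < n" for i
    using c(1) that unfolding isolator_def by auto
  then obtain Y where Y: "finite Y" "Y \<subseteq> carrier G" "adjoin_seq G {\<one>} c n \<subseteq> K <#> Y"
    using adjoin_seq_torsion_over_subgroup[OF K, of n c] by blast
  then show ?thesis using finite_subgroups_between[OF K] c(2) by simp
qed

section \<open>Torsion-free extensions are free\<close>

lemma isolated_int_pow:
  assumes iso: "isolated G D W" and D: "subgroup D G" and W: "W \<subseteq> carrier G"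
    and x: "x \<in> W" "x [^] (t::int) \<in> D" "t \<noteq> 0"
  shows "x \<in> D"
proof (cases "0 < t")
  case True
  then have "x [^] nat t \<in> D" using x(2) by (metis int_pow_int int_nat_eq less_le_not_le)
  moreover have "0 < nat t" using True by simp
  ultimately show ?thesis using iso x(1) unfolding isolated_def by blast
next
  case False
  then have t: "t = - int (nat (- t))" "0 < nat (- t)" using x(3) by auto
  have xc: "x \<in> carrier G" using x(1) W by blast
  have "inv (x [^] nat (- t)) \<in> D" using x(2) xc by (metis int_pow_neg_int t(1))
  then have "x [^] nat (- t) \<in> D" using subgroup.m_inv_closed[OF D] xc by (metis inv_inv nat_pow_closed)
  then show ?thesis using iso x(1) t(2) unfolding isolated_def by blast
qed

lemma unimodular_change_of_generators:
  fixes u v x y :: int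
  assumes a: "a \<in> carrier G" and b: "b \<in> carrier G" and det: "u * x + v * y = 1"
  shows "(a [^] u \<otimes> b [^] v) [^] x \<otimes> (a [^] (- y) \<otimes> b [^] x) [^] (- v) = a"
    and "(a [^] u \<otimes> b [^] v) [^] y \<otimes> (a [^] (- y) \<otimes> b [^] x) [^] u = b"
proof -
  have pow: "(a [^] i \<otimes> b [^] j) [^] k = a [^] (i * k) \<otimes> b [^] (j * k)" for i j k :: int
    using a b by (simp add: int_pow_distrib int_pow_pow)
  have mult: "(a [^] i \<otimes> b [^] j) \<otimes> (a [^] k \<otimes> b [^] l) = a [^] (i + k) \<otimes> b [^] (j + l)"
    for i j k l :: int
    using a b by (simp add: int_pow_mult m_ac)
  have "u * x + - y * - v = 1" "v * x + x * - v = 0" "u * y + - y * u = 0" "v * y + x * u = 1"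
    using det by (simp_all add: algebra_simps)
  then show "(a [^] u \<otimes> b [^] v) [^] x \<otimes> (a [^] (- y) \<otimes> b [^] x) [^] (- v) = a"
    and "(a [^] u \<otimes> b [^] v) [^] y \<otimes> (a [^] (- y) \<otimes> b [^] x) [^] u = b"
    using a b by (simp_all only: pow mult) simp_all
qed

text \<open>If \<open>a\<^sup>u b\<^sup>v \<in> H\<close> for some \<open>(u, v) \<noteq> 0\<close> and \<open>H\<close> is isolated in \<open>H\<langle>a\<rangle>\<langle>b\<rangle>\<close>,
  then \<open>(u, v) = g (u', v')\<close> with \<open>u', v'\<close> coprime, \<open>a\<^sup>u\<^sup>' b\<^sup>v\<^sup>' \<in> H\<close>, and completing \<open>(u', v')\<close>
  to a unimodular matrix yields a single generator \<open>w\<close> over \<open>H\<close>.\<close>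

lemma adjoin_adjoin_eq_adjoin:
  fixes u v :: int
  assumes H: "subgroup H G" and a: "a \<in> carrier G" and b: "b \<in> carrier G"
    and iso: "isolated G H (adjoin G (adjoin G H a) b)"
    and rel: "a [^] u \<otimes> b [^] v \<in> H" "u \<noteq> 0 \<or> v \<noteq> 0"
  shows "\<exists>w\<in>carrier G. adjoin G (adjoin G H a) b = adjoin G H w"
proof -
  interpret H: subgroup H G by (rule H)
  define W where "W = adjoin G (adjoin G H a) b"
  have W: "subgroup W G" unfolding W_def by (intro adjoin_subgroup H a b)
  have HW: "H \<subseteq> W" unfolding W_def
    by (meson H.subset a adjoin_subgroup adjoin_superset H subgroup.subset subset_trans)
  have aW: "a \<in> W" unfolding W_def
    by (meson H a adjoin_gen adjoin_subgroup adjoin_superset subgroup.subset subsetD)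
  have bW: "b \<in> W" unfolding W_def by (intro adjoin_gen adjoin_subgroup H a b)
  define g where "g = gcd u v"
  have g: "0 < g" unfolding g_def using rel(2) by simp
  obtain u' v' where uv': "u = g * u'" "v = g * v'" unfolding g_def
    by (metis dvd_def gcd_dvd1 gcd_dvd2)
  obtain x y where "x * u + y * v = g" using bezout_int[of u v] unfolding g_def by blast
  then have "g * (u' * x + v' * y) = g * 1" using uv' by (simp add: algebra_simps)
  then have det: "u' * x + v' * y = 1" using g by simp
  define e where "e = a [^] u' \<otimes> b [^] v'"
  define w where "w = a [^] (- y) \<otimes> b [^] x"
  have "e [^] g \<in> H" using rel(1) a b uv' by (simp add: e_def int_pow_distrib int_pow_pow mult.commute)
  moreover have "e \<in> W" unfolding e_def
    using aW bW by (intro subgroup.m_closed[OF W] subgroup_int_pow_closed[OF W])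
  ultimately have eH: "e \<in> H"
    using isolated_int_pow[OF iso[folded W_def] H subgroup.subset[OF W]] g by simp
  have wW: "w \<in> W" unfolding w_def
    using aW bW by (intro subgroup.m_closed[OF W] subgroup_int_pow_closed[OF W])
  have w: "w \<in> carrier G" unfolding w_def using a b by simp
  have Hw: "subgroup (adjoin G H w) G" by (rule adjoin_subgroup[OF H w])
  have "a \<in> adjoin G H w"
    using adjoinI[OF subgroup_int_pow_closed[OF H eH], of x w "- v'"]
    unfolding e_def w_def unimodular_change_of_generators(1)[OF a b det] .
  moreover have "b \<in> adjoin G H w"
    using adjoinI[OF subgroup_int_pow_closed[OF H eH], of y w u']
    unfolding e_def w_def unimodular_change_of_generators(2)[OF a b det] .
  ultimately have "W \<subseteq> adjoin G H w" unfolding W_def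
    by (intro adjoin_least[OF Hw] adjoin_superset H.subset)
  moreover have "adjoin G H w \<subseteq> W" by (rule adjoin_least[OF W HW wW])
  ultimately show ?thesis using w unfolding W_def by blast
qed

lemma adjoin_pow_relation:
  assumes H: "subgroup H G" and a: "a \<in> carrier G" and b: "b \<in> carrier G" and z: "z \<in> carrier G"
    and p: "0 < p" "a [^] (p::nat) \<in> adjoin G H z" and q: "0 < q" "b [^] (q::nat) \<in> adjoin G H z"
  obtains u v :: int where "a [^] u \<otimes> b [^] v \<in> H" "u \<noteq> 0 \<or> v \<noteq> 0"
proof -
  interpret H: subgroup H G by (rule H)
  obtain h1 and s :: int where h1: "a [^] p = h1 \<otimes> z [^] s" "h1 \<in> H" using p(2) by (rule adjoinE)
  obtain h2 and t :: int where h2: "b [^] q = h2 \<otimes> z [^] t" "h2 \<in> H" using q(2) by (rule adjoinE)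
  have h1c: "h1 \<in> carrier G" and h2c: "h2 \<in> carrier G" using h1 h2 H.subset by auto
  show ?thesis
  proof (cases "s = 0")
    case True
    then have "a [^] int p \<otimes> b [^] (0::int) \<in> H" using h1 a h1c by (simp add: int_pow_int)
    then show ?thesis using that[of "int p" 0] p(1) by simp
  next
    case False
    have "a [^] (int p * t) = (h1 \<otimes> z [^] s) [^] t"
      using a by (simp add: int_pow_pow flip: h1(1) int_pow_int)
    also have "\<dots> = h1 [^] t \<otimes> z [^] (s * t)"
      using h1c z by (simp add: int_pow_distrib int_pow_pow)
    finally have ap: "a [^] (int p * t) = h1 [^] t \<otimes> z [^] (s * t)" .
    have "b [^] (- (int q * s)) = inv ((h2 \<otimes> z [^] t) [^] s)"
      using b by (simp add: int_pow_pow int_pow_neg flip: h2(1) int_pow_int)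
    also have "\<dots> = inv (h2 [^] s) \<otimes> inv (z [^] (s * t))"
      using h2c z by (simp add: int_pow_distrib int_pow_pow inv_mult mult.commute)
    finally have bq: "b [^] (- (int q * s)) = inv (h2 [^] s) \<otimes> inv (z [^] (s * t))" .
    have "a [^] (int p * t) \<otimes> b [^] (- (int q * s))
        = h1 [^] t \<otimes> inv (h2 [^] s) \<otimes> (z [^] (s * t) \<otimes> inv (z [^] (s * t)))"
      unfolding ap bq using h1c h2c z by (simp add: m_ac)
    also have "\<dots> = h1 [^] t \<otimes> inv (h2 [^] s)" using h1c h2c z by simp
    finally have "a [^] (int p * t) \<otimes> b [^] (- (int q * s)) \<in> H"
      using h1(2) h2(2) by (simp add: H.m_inv_closed subgroup_int_pow_closed[OF H])
    then show ?thesis using that[of "int p * t" "- (int q * s)"] False q(1) by simp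
  qed
qed

lemma adjoin_adjoin_cyclic_over:
  assumes H: "subgroup H G" and a: "a \<in> carrier G" and b: "b \<in> carrier G" and z: "z \<in> carrier G"
    and iso: "isolated G H (adjoin G (adjoin G H a) b)"
    and tors: "\<forall>x\<in>adjoin G (adjoin G H a) b. \<exists>j::nat. 0 < j \<and> x [^] j \<in> adjoin G H z"
  shows "\<exists>w\<in>carrier G. adjoin G (adjoin G H a) b = adjoin G H w"
proof -
  have "a \<in> adjoin G (adjoin G H a) b"
    by (meson H a adjoin_gen adjoin_subgroup adjoin_superset subgroup.subset subsetD)
  then obtain p :: nat where p: "0 < p" "a [^] p \<in> adjoin G H z" using tors by blast
  have "b \<in> adjoin G (adjoin G H a) b" by (intro adjoin_gen adjoin_subgroup H a b)
  then obtain q :: nat where q: "0 < q" "b [^] q \<in> adjoin G H z" using tors by blast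
  obtain u v :: int where "a [^] u \<otimes> b [^] v \<in> H" "u \<noteq> 0 \<or> v \<noteq> 0"
    by (rule adjoin_pow_relation[OF H a b z p q])
  then show ?thesis by (rule adjoin_adjoin_eq_adjoin[OF H a b iso])
qed

lemma adjoin_seq_cyclic_over:
  assumes H: "subgroup H G" and z: "z \<in> carrier G"
    and \<eta>: "\<And>i. i < k \<Longrightarrow> \<eta> i \<in> carrier G"
    and iso: "isolated G H (adjoin_seq G H \<eta> k)"
    and tors: "\<forall>x\<in>adjoin_seq G H \<eta> k. \<exists>j::nat. 0 < j \<and> x [^] j \<in> adjoin G H z"
  shows "\<exists>w\<in>carrier G. adjoin_seq G H \<eta> k = adjoin G H w"
  using \<eta> iso tors
proof (induction k)
  case 0
  show ?case using adjoin_one[OF subgroup.subset[OF H]] by (intro bexI[of _ \<one>]) simp_all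
next
  case (Suc k)
  have "subgroup (adjoin_seq G H \<eta> k) G" using Suc.prems(1) by (intro adjoin_seq_subgroup[OF H]) simp
  then have sub: "adjoin_seq G H \<eta> k \<subseteq> adjoin_seq G H \<eta> (Suc k)"
    using adjoin_superset[OF subgroup.subset] by simp
  obtain w0 where w0: "w0 \<in> carrier G" "adjoin_seq G H \<eta> k = adjoin G H w0"
    using Suc.IH Suc.prems isolated_mono[OF _ sub] sub by (metis less_SucI subsetD)
  have "adjoin_seq G H \<eta> (Suc k) = adjoin G (adjoin G H w0) (\<eta> k)" using w0 by simp
  then show ?case
    using adjoin_adjoin_cyclic_over[OF H w0(1) _ z] Suc.prems(1,2,3) by simp
qed

lemma isolated_torsion_over_adjoin:
  assumes s: "\<And>i. i < n \<Longrightarrow> s i \<in> carrier G" and gen: "carrier G = adjoin_seq G {\<one>} s n"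
    and H: "subgroup H G" and W: "subgroup W G" "H \<subseteq> W" "isolated G H W"
    and z: "z \<in> carrier G" and tors: "\<forall>x\<in>W. \<exists>j::nat. 0 < j \<and> x [^] j \<in> adjoin G H z"
  obtains w where "w \<in> W" "W = adjoin G H w"
proof -
  interpret W: subgroup W G by (rule W(1))
  have "W \<subseteq> adjoin_seq G {\<one>} s n" using W.subset gen by simp
  then obtain \<eta> where \<eta>: "\<forall>i<n. \<eta> i \<in> W" "W = adjoin_seq G {\<one>} \<eta> n"
    using subgroup_of_adjoin_seq[of n s, OF s W(1)] by blast
  have WH: "W = adjoin_seq G H \<eta> n"
  proof
    show "W \<subseteq> adjoin_seq G H \<eta> n"
      using \<eta>(2) adjoin_seq_mono[of "{\<one>}" H] subgroup.one_closed[OF H] by blast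
    show "adjoin_seq G H \<eta> n \<subseteq> W" using adjoin_seq_least[OF W(1,2)] \<eta>(1) by blast
  qed
  obtain w where "w \<in> carrier G" "W = adjoin G H w"
    using adjoin_seq_cyclic_over[OF H z, of n \<eta>] \<eta>(1) W.subset W(3) tors WH by auto
  moreover have "w \<in> adjoin G H w" using adjoin_gen[OF H] calculation(1) .
  ultimately show ?thesis using that by simp
qed

lemma free_over_extend:
  assumes "free_over G D H r" "H \<subseteq> W" "w \<in> W" "W = adjoin G H w"
    and "\<forall>t::int. w [^] t \<in> H \<longrightarrow> t = 0"
  shows "free_over G D W (Suc r)"
proof -
  obtain f where f: "\<forall>i<r. f i \<in> H" "H = adjoin_seq G D f r" "independent_seq G D f r"
    using assms(1) unfolding free_over_def by blast
  have "\<forall>i<Suc r. (f(r := w)) i \<in> W" using f(1) assms(2,3) by (auto simp: less_Suc_eq)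
  moreover have "W = adjoin_seq G D (f(r := w)) (Suc r)" using f(2) assms(4) by simp
  moreover have "independent_seq G D (f(r := w)) (Suc r)" using f(2,3) assms(5) by simp
  ultimately show ?thesis unfolding free_over_def by blast
qed

text \<open>Induction on \<open>m\<close>: the isolator \<open>H\<close> of \<open>D\<langle>g\<^sub>0, \<dots>, g\<^sub>m\<^sub>-\<^sub>2\<rangle>\<close> in \<open>W\<close> is free over \<open>D\<close> by
  induction, and \<open>W\<close> is torsion over \<open>H\<langle>g\<^sub>m\<^sub>-\<^sub>1\<rangle>\<close> with \<open>H\<close> isolated in \<open>W\<close>, so \<open>W = H\<langle>w\<rangle>\<close>.\<close>

lemma isolated_subgroup_free_over:
  assumes s: "\<And>i. i < n \<Longrightarrow> s i \<in> carrier G" and gen: "carrier G = adjoin_seq G {\<one>} s n"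
    and D: "subgroup D G"
  shows "subgroup W G \<Longrightarrow> D \<subseteq> W \<Longrightarrow> isolated G D W \<Longrightarrow> (\<And>i. i < m \<Longrightarrow> g i \<in> W) \<Longrightarrow>
    \<forall>x\<in>W. \<exists>j::nat. 0 < j \<and> x [^] j \<in> adjoin_seq G D g m \<Longrightarrow> \<exists>r\<le>m. free_over G D W r"
proof (induction m arbitrary: W g)
  case 0
  then have "W = D" unfolding isolated_def by fastforce
  then have "free_over G D W 0" unfolding free_over_def by simp
  then show ?case by blast
next
  case (Suc m)
  note W = Suc.prems(1)
  interpret W: subgroup W G by (rule W)
  have gc: "\<And>i. i < Suc m \<Longrightarrow> g i \<in> carrier G" using Suc.prems(4) W.subset by blast
  define T where "T = adjoin_seq G D g m"
  have T: "subgroup T G" unfolding T_def using adjoin_seq_subgroup[OF D] gc by simp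
  have TW: "T \<subseteq> W" unfolding T_def using adjoin_seq_least[OF W Suc.prems(2)] Suc.prems(4) by simp
  define H where "H = isolator G T W"
  have H: "subgroup H G" unfolding H_def by (rule isolator_subgroup[OF T W])
  have HW: "H \<subseteq> W" unfolding H_def by (rule isolator_subset)
  have TH: "T \<subseteq> H" unfolding H_def using subset_isolator[OF subgroup.subset[OF T], of W] TW by blast
  have DT: "D \<subseteq> T" unfolding T_def using adjoin_seq_superset[OF D] gc by simp
  have isoHW: "isolated G H W" unfolding H_def by (rule isolated_isolator[OF W.subset])
  obtain r where r: "r \<le> m" "free_over G D H r"
  proof -
    have "\<exists>r\<le>m. free_over G D H r"
    proof (rule Suc.IH[OF H])
      show "D \<subseteq> H" using DT TH by blast
      show "isolated G D H" using isolated_mono[OF Suc.prems(3) HW] .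
      show "g i \<in> H" if "i < m" for i
        using adjoin_seq_gen[OF D, of m g i] gc that TH unfolding T_def by auto
      show "\<forall>x\<in>H. \<exists>j::nat. 0 < j \<and> x [^] j \<in> adjoin_seq G D g m"
        unfolding H_def isolator_def T_def by blast
    qed
    then show ?thesis using that by blast
  qed
  have "adjoin_seq G D g (Suc m) \<subseteq> adjoin G H (g m)" using adjoin_mono[OF TH] unfolding T_def by simp
  then have "\<forall>x\<in>W. \<exists>j::nat. 0 < j \<and> x [^] j \<in> adjoin G H (g m)" using Suc.prems(5) by blast
  moreover have "g m \<in> carrier G" using gc by simp
  ultimately obtain w where wW: "w \<in> W" and w: "W = adjoin G H w"
    using isolated_torsion_over_adjoin[OF s gen H W HW isoHW] by blast
  show ?case
  proof (cases "w \<in> H")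
    case True
    then have "W = H" using w adjoin_eq_self[OF H] by simp
    then show ?thesis using r by (metis le_SucI)
  next
    case False
    have "\<forall>t::int. w [^] t \<in> H \<longrightarrow> t = 0"
      using isolated_int_pow[OF isoHW H W.subset wW] False by blast
    then have "free_over G D W (Suc r)" by (rule free_over_extend[OF r(2) HW wW w])
    then show ?thesis using r(1) by (metis Suc_le_mono)
  qed
qed

lemma free_over_inter_isolator:
  assumes s: "\<And>i. i < n \<Longrightarrow> s i \<in> carrier G" and gen: "carrier G = adjoin_seq G {\<one>} s n"
    and K: "subgroup K G" and B: "subgroup B G"
  shows "\<exists>r\<le>n. free_over G (B \<inter> isolator G K (carrier G)) B r"
proof -
  interpret B: subgroup B G by (rule B)
  define D where "D = B \<inter> isolator G K (carrier G)"
  have D: "subgroup D G" unfolding D_def by (intro subgroups_Inter_pair B isolator_subgroup K subgroup_self)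
  have "isolated G D B"
    unfolding isolated_def
  proof (intro ballI allI impI)
    fix x and j :: nat assume x: "x \<in> B" "0 < j" "x [^] j \<in> D"
    then have "x \<in> isolator G K (carrier G)"
      using isolated_isolator[of "carrier G" K] B.subset unfolding isolated_def D_def by blast
    then show "x \<in> D" using x(1) unfolding D_def by blast
  qed
  moreover have "B \<subseteq> adjoin_seq G {\<one>} s n" using gen B.subset by simp
  then obtain \<eta> where \<eta>: "\<forall>i<n. \<eta> i \<in> B" "B = adjoin_seq G {\<one>} \<eta> n"
    using subgroup_of_adjoin_seq[of n s, OF s B] by blast
  moreover have "\<forall>x\<in>B. \<exists>j::nat. 0 < j \<and> x [^] j \<in> adjoin_seq G D \<eta> n"
  proof
    fix x assume "x \<in> B"
    then have "x \<in> adjoin_seq G D \<eta> n"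
      using \<eta>(2) adjoin_seq_mono[of "{\<one>}" D \<eta> n] subgroup.one_closed[OF D] by blast
    then show "\<exists>j::nat. 0 < j \<and> x [^] j \<in> adjoin_seq G D \<eta> n"
      using \<open>x \<in> B\<close> B.subset by (intro exI[of _ "1::nat"]) auto
  qed
  moreover have "D \<subseteq> B" unfolding D_def by blast
  ultimately have "\<exists>r\<le>n. free_over G D B r"
    using isolated_subgroup_free_over[OF s gen D B, where m = n and g = \<eta>] by blast
  then show ?thesis unfolding D_def .
qed

section \<open>Isomorphisms of free extensions\<close>

lemma adjoin_decomposition_unique:
  assumes Y: "subgroup Y G" and a: "a \<in> carrier G" and indep: "\<forall>t::int. a [^] t \<in> Y \<longrightarrow> t = 0"
    and xy: "x \<in> Y" "y \<in> Y" and eq: "x \<otimes> a [^] (t::int) = y \<otimes> a [^] (s::int)"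
  shows "x = y \<and> t = s"
proof -
  interpret Y: subgroup Y G by (rule Y)
  have xc: "x \<in> carrier G" and yc: "y \<in> carrier G" using xy Y.subset by auto
  have c: "inv y \<otimes> x \<otimes> a [^] t = a [^] s"
    using eq xc yc a by (simp add: m_assoc inv_solve_left')
  have "a [^] (s - t) = a [^] s \<otimes> inv (a [^] t)" using a by (simp add: int_pow_diff)
  also have "\<dots> = inv y \<otimes> x" unfolding c[symmetric] using xc yc a by (simp add: m_assoc)
  finally have "a [^] (s - t) = inv y \<otimes> x" .
  then have "a [^] (s - t) \<in> Y" using xy by simp
  then have "t = s" using indep by auto
  then show ?thesis using eq xc yc a by simp
qed

text \<open>Since \<open>Y\<langle>a\<rangle> \<cong> Y \<times> \<int>\<close> when \<open>a\<close> is independent over \<open>Y\<close>, the map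
  \<open>x a\<^sup>t \<mapsto> h(x) a'\<^sup>t\<close> is well defined.\<close>

lemma adjoin_ext_eq:
  assumes Y: "subgroup Y G" and a: "a \<in> carrier G" and indep: "\<forall>t::int. a [^] t \<in> Y \<longrightarrow> t = 0"
    and x: "x \<in> Y"
  shows "adjoin_ext G Y a a' h (x \<otimes> a [^] (t::int)) = h x \<otimes> a' [^] t"
  unfolding adjoin_ext_def
proof (rule the_equality)
  show "\<exists>x' (t'::int). x' \<in> Y \<and> x \<otimes> a [^] t = x' \<otimes> a [^] t' \<and> h x \<otimes> a' [^] t = h x' \<otimes> a' [^] t'"
    using x by blast
  fix v assume "\<exists>x' (t'::int). x' \<in> Y \<and> x \<otimes> a [^] t = x' \<otimes> a [^] t' \<and> v = h x' \<otimes> a' [^] t'"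
  then obtain x' and t' :: int where x': "x' \<in> Y" "x \<otimes> a [^] t = x' \<otimes> a [^] t'" "v = h x' \<otimes> a' [^] t'"
    by blast
  then show "v = h x \<otimes> a' [^] t" using adjoin_decomposition_unique[OF Y a indep x x'(1,2)] by simp
qed

lemma iso_extend_adjoin:
  assumes Y: "subgroup Y G" and Y': "subgroup Y' G"
    and h: "h \<in> iso (G\<lparr>carrier := Y\<rparr>) (G\<lparr>carrier := Y'\<rparr>)"
    and a: "a \<in> carrier G" and a': "a' \<in> carrier G"
    and indep: "\<forall>t::int. a [^] t \<in> Y \<longrightarrow> t = 0" and indep': "\<forall>t::int. a' [^] t \<in> Y' \<longrightarrow> t = 0"
  obtains h' where "h' \<in> iso (G\<lparr>carrier := adjoin G Y a\<rparr>) (G\<lparr>carrier := adjoin G Y' a'\<rparr>)"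
    "\<forall>x\<in>Y. h' x = h x"
proof -
  interpret Y: subgroup Y G by (rule Y)
  interpret Y': subgroup Y' G by (rule Y')
  have hb: "bij_betw h Y Y'" and hm: "\<forall>x\<in>Y. \<forall>y\<in>Y. h (x \<otimes> y) = h x \<otimes> h y"
    using h unfolding iso_carrier_update_iff by blast+
  have hX: "h x \<in> Y'" if "x \<in> Y" for x by (rule bij_betw_apply[OF hb that])
  define h' where "h' = adjoin_ext G Y a a' h"
  have h'_eq: "h' (x \<otimes> a [^] t) = h x \<otimes> a' [^] t" if "x \<in> Y" for x and t :: int
    unfolding h'_def using adjoin_ext_eq[OF Y a indep that] .
  have "\<forall>u\<in>adjoin G Y a. \<forall>w\<in>adjoin G Y a. h' (u \<otimes> w) = h' u \<otimes> h' w"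
  proof (intro ballI)
    fix u w assume "u \<in> adjoin G Y a" "w \<in> adjoin G Y a"
    then obtain x y and t s :: int where u: "u = x \<otimes> a [^] t" "x \<in> Y" and w: "w = y \<otimes> a [^] s" "y \<in> Y"
      by (meson adjoinE)
    have c: "x \<in> carrier G" "y \<in> carrier G" "h x \<in> carrier G" "h y \<in> carrier G"
      using u(2) w(2) Y.subset Y'.subset hX by auto
    have "u \<otimes> w = (x \<otimes> y) \<otimes> a [^] (t + s)" unfolding u(1) w(1) using c a by (simp add: int_pow_mult m_ac)
    then have "h' (u \<otimes> w) = (h x \<otimes> h y) \<otimes> a' [^] (t + s)"
      using h'_eq[OF Y.m_closed[OF u(2) w(2)]] hm u(2) w(2) by simp
    also have "\<dots> = h' u \<otimes> h' w"
      unfolding u(1) w(1) h'_eq[OF u(2)] h'_eq[OF w(2)] using c a' by (simp add: int_pow_mult m_ac)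
    finally show "h' (u \<otimes> w) = h' u \<otimes> h' w" .
  qed
  moreover have "inj_on h' (adjoin G Y a)"
  proof (rule inj_onI)
    fix u w assume "u \<in> adjoin G Y a" "w \<in> adjoin G Y a" "h' u = h' w"
    moreover obtain x and t :: int where u: "u = x \<otimes> a [^] t" "x \<in> Y" using \<open>u \<in> adjoin G Y a\<close> by (rule adjoinE)
    moreover obtain y and s :: int where w: "w = y \<otimes> a [^] s" "y \<in> Y" using \<open>w \<in> adjoin G Y a\<close> by (rule adjoinE)
    ultimately have "h x \<otimes> a' [^] t = h y \<otimes> a' [^] s" using h'_eq by simp
    then have "h x = h y \<and> t = s" by (rule adjoin_decomposition_unique[OF Y' a' indep' hX[OF u(2)] hX[OF w(2)]])
    then show "u = w" using u w bij_betw_imp_inj_on[OF hb] by (auto dest: inj_onD)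
  qed
  moreover have "h' ` adjoin G Y a = adjoin G Y' a'"
  proof
    show "h' ` adjoin G Y a \<subseteq> adjoin G Y' a'"
      by (auto elim!: adjoinE simp: h'_eq intro!: adjoinI hX)
    show "adjoin G Y' a' \<subseteq> h' ` adjoin G Y a"
    proof
      fix v assume "v \<in> adjoin G Y' a'"
      then obtain x' and t :: int where v: "v = x' \<otimes> a' [^] t" "x' \<in> Y'" by (rule adjoinE)
      then obtain x where x: "x \<in> Y" "x' = h x" using hb unfolding bij_betw_def by blast
      then have "v = h' (x \<otimes> a [^] t)" using v(1) h'_eq[OF x(1)] by simp
      then show "v \<in> h' ` adjoin G Y a" using x(1) adjoinI by blast
    qed
  qed
  moreover have "\<forall>x\<in>Y. h' x = h x"
    using h'_eq[of _ 0] Y.subset Y'.subset hX by (metis int_pow_0 r_one subsetD)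
  ultimately show ?thesis using that unfolding iso_carrier_update_iff bij_betw_def by blast
qed

lemma iso_adjoin_seq:
  assumes D: "subgroup D G"
  shows "(\<And>i. i < r \<Longrightarrow> f i \<in> carrier G) \<Longrightarrow> (\<And>i. i < r \<Longrightarrow> f' i \<in> carrier G) \<Longrightarrow>
    independent_seq G D f r \<Longrightarrow> independent_seq G D f' r \<Longrightarrow>
    \<exists>h. h \<in> iso (G\<lparr>carrier := adjoin_seq G D f r\<rparr>) (G\<lparr>carrier := adjoin_seq G D f' r\<rparr>) \<and>
        (\<forall>d\<in>D. h d = d)"
proof (induction r)
  case 0
  have "(\<lambda>x. x) \<in> iso (G\<lparr>carrier := D\<rparr>) (G\<lparr>carrier := D\<rparr>)"
    unfolding iso_carrier_update_iff by (simp add: bij_betw_id[unfolded id_def])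
  then show ?case by auto
next
  case (Suc r)
  obtain h where h: "h \<in> iso (G\<lparr>carrier := adjoin_seq G D f r\<rparr>) (G\<lparr>carrier := adjoin_seq G D f' r\<rparr>)"
    "\<forall>d\<in>D. h d = d"
    using Suc by auto
  have Y: "subgroup (adjoin_seq G D f r) G" and Y': "subgroup (adjoin_seq G D f' r) G"
    using adjoin_seq_subgroup[OF D] Suc.prems(1,2) by simp_all
  obtain h' where h': "h' \<in> iso (G\<lparr>carrier := adjoin_seq G D f (Suc r)\<rparr>) (G\<lparr>carrier := adjoin_seq G D f' (Suc r)\<rparr>)"
    "\<forall>x\<in>adjoin_seq G D f r. h' x = h x"
    using iso_extend_adjoin[OF Y Y' h(1), of "f r" "f' r"] Suc.prems by auto
  moreover have "D \<subseteq> adjoin_seq G D f r" using adjoin_seq_superset[OF D] Suc.prems(1) by simp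
  ultimately show ?case using h(2) by (intro exI[of _ h']) auto
qed

lemma free_over_iso:
  assumes D: "subgroup D G" and B: "subgroup B G" "free_over G D B r"
    and B': "subgroup B' G" "free_over G D B' r"
  obtains h where "h \<in> iso (G\<lparr>carrier := B\<rparr>) (G\<lparr>carrier := B'\<rparr>)" "\<forall>d\<in>D. h d = d"
proof -
  obtain f where f: "\<forall>i<r. f i \<in> B" "B = adjoin_seq G D f r" "independent_seq G D f r"
    using B(2) unfolding free_over_def by blast
  obtain f' where f': "\<forall>i<r. f' i \<in> B'" "B' = adjoin_seq G D f' r" "independent_seq G D f' r"
    using B'(2) unfolding free_over_def by blast
  have "\<And>i. i < r \<Longrightarrow> f i \<in> carrier G" "\<And>i. i < r \<Longrightarrow> f' i \<in> carrier G"
    using f(1) f'(1) subgroup.subset[OF B(1)] subgroup.subset[OF B'(1)] by auto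
  then show ?thesis using iso_adjoin_seq[OF D] f(2,3) f'(2,3) that by metis
qed

end

section \<open>Amalgamated products along isomorphic factors\<close>

lemma amalg_words_append [simp]:
  "u @ v \<in> amalg_words G H \<longleftrightarrow> u \<in> amalg_words G H \<and> v \<in> amalg_words G H"
  unfolding amalg_words_def by auto

lemma amalg_words_Cons [simp]:
  "a # v \<in> amalg_words G H \<longleftrightarrow> a \<in> Inl ` carrier G \<union> Inr ` carrier H \<and> v \<in> amalg_words G H"
  unfolding amalg_words_def by auto

lemma amalg_words_Nil [simp]: "[] \<in> amalg_words G H"
  unfolding amalg_words_def by auto

lemma amalg_rel_in_words:
  assumes "group G" "group H" "f \<in> carrier K \<rightarrow> carrier G" "g \<in> carrier K \<rightarrow> carrier H"
  shows "(u, v) \<in> amalg_rel G H K f g \<Longrightarrow> u \<in> amalg_words G H \<and> v \<in> amalg_words G H"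
  by (induction rule: amalg_rel.induct) (use assms in \<open>auto simp: group.is_monoid monoid.m_closed\<close>)

lemma amalg_rel_equiv:
  assumes "group G" "group H" "f \<in> carrier K \<rightarrow> carrier G" "g \<in> carrier K \<rightarrow> carrier H"
  shows "equiv (amalg_words G H) (amalg_rel G H K f g)"
proof (rule equivI)
  show "amalg_rel G H K f g \<subseteq> amalg_words G H \<times> amalg_words G H"
    using amalg_rel_in_words[OF assms] by auto
  show "refl_on (amalg_words G H) (amalg_rel G H K f g)"
    unfolding refl_on_def by (auto intro: amalg_rel.rrefl)
  show "sym (amalg_rel G H K f g)" unfolding sym_def by (auto intro: amalg_rel.rsym)
  show "trans (amalg_rel G H K f g)" unfolding trans_def by (blast intro: amalg_rel.rtrans)
qed

lemma amalg_rel_context: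
  "(u, v) \<in> amalg_rel G H K f g \<Longrightarrow> p \<in> amalg_words G H \<Longrightarrow> q \<in> amalg_words G H \<Longrightarrow>
   (p @ u @ q, p @ v @ q) \<in> amalg_rel G H K f g"
proof (induction rule: amalg_rel.induct)
  case (rrefl w) then show ?case by (auto intro: amalg_rel.rrefl)
next
  case (rsym u v) then show ?case by (auto intro: amalg_rel.rsym)
next
  case (rtrans u v w) then show ?case by (meson amalg_rel.rtrans)
next
  case (unitL u v) then show ?case using amalg_rel.unitL[of "p @ u" G H "v @ q"] by simp
next
  case (unitR u v) then show ?case using amalg_rel.unitR[of "p @ u" G H "v @ q"] by simp
next
  case (mergeL u v x y) then show ?case using amalg_rel.mergeL[of "p @ u" G H "v @ q" x y] by simp
next
  case (mergeR u v x y) then show ?case using amalg_rel.mergeR[of "p @ u" G H "v @ q" x y] by simp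
next
  case (ident u v k) then show ?case using amalg_rel.ident[of "p @ u" G H "v @ q" k K f g] by simp
qed

lemma amalg_rel_append:
  assumes "group G" "group H" "f \<in> carrier K \<rightarrow> carrier G" "g \<in> carrier K \<rightarrow> carrier H"
    and "(u, u') \<in> amalg_rel G H K f g" "(v, v') \<in> amalg_rel G H K f g"
  shows "(u @ v, u' @ v') \<in> amalg_rel G H K f g"
proof -
  note words = amalg_rel_in_words[OF assms(1-4)]
  have "(u @ v, u' @ v) \<in> amalg_rel G H K f g"
    using amalg_rel_context[OF assms(5), of "[]" v] words[OF assms(6)] by simp
  moreover have "(u' @ v, u' @ v') \<in> amalg_rel G H K f g"
    using amalg_rel_context[OF assms(6), of u' "[]"] words[OF assms(5)] by simp
  ultimately show ?thesis by (rule amalg_rel.rtrans)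
qed

definition map_right :: "('b \<Rightarrow> 'd) \<Rightarrow> ('a + 'b) list \<Rightarrow> ('a + 'd) list" where
  "map_right h = map (map_sum id h)"

lemma map_right_simps [simp]:
  "map_right h [] = []" "map_right h (u @ v) = map_right h u @ map_right h v"
  "map_right h (Inl x # v) = Inl x # map_right h v" "map_right h (Inr y # v) = Inr (h y) # map_right h v"
  unfolding map_right_def by auto

lemma map_right_words:
  "h \<in> carrier H \<rightarrow> carrier H' \<Longrightarrow> w \<in> amalg_words G H \<Longrightarrow> map_right h w \<in> amalg_words G H'"
  unfolding amalg_words_def map_right_def by (induction w) auto

lemma map_right_comp: "(\<And>x. x \<in> carrier H \<Longrightarrow> h' (h x) = x) \<Longrightarrow> w \<in> amalg_words G H \<Longrightarrow>
    map_right h' (map_right h w) = w"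
  unfolding amalg_words_def map_right_def by (induction w) auto

lemma map_right_rel:
  assumes G: "group G" and H: "group H" "group H'" and h: "h \<in> hom H H'"
    and hg: "\<forall>k\<in>carrier K. h (g k) = g' k"
  shows "(u, v) \<in> amalg_rel G H K f g \<Longrightarrow> (map_right h u, map_right h v) \<in> amalg_rel G H' K f g'"
proof (induction rule: amalg_rel.induct)
  have hc: "h \<in> carrier H \<rightarrow> carrier H'" using h by (simp add: hom_def)
  note words = map_right_words[OF hc, of _ G]
  {
    case (rrefl w) then show ?case using words by (auto intro: amalg_rel.rrefl)
  next
    case (rsym u v) then show ?case by (auto intro: amalg_rel.rsym)
  next
    case (rtrans u v w) then show ?case by (meson amalg_rel.rtrans)
  next
    case (unitL u v)
    then show ?case using words amalg_rel.unitL[of "map_right h u" G H' "map_right h v" K f g'] by simp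
  next
    case (unitR u v)
    then show ?case
      using words amalg_rel.unitR[of "map_right h u" G H' "map_right h v" K f g'] hom_one[OF h H] by simp
  next
    case (mergeL u v x y)
    then show ?case using words amalg_rel.mergeL[of "map_right h u" G H' "map_right h v" x y K f g'] by simp
  next
    case (mergeR u v x y)
    then have "h x \<in> carrier H'" "h y \<in> carrier H'" using hc by auto
    with mergeR show ?case
      using words amalg_rel.mergeR[of "map_right h u" G H' "map_right h v" "h x" "h y" K f g'] h
      by (simp add: hom_mult)
  next
    case (ident u v k)
    then show ?case using words amalg_rel.ident[of "map_right h u" G H' "map_right h v" k K f g'] hg by simp
  }
qed

lemma equiv_class_some:
  assumes "equiv W R" "w \<in> W"
  shows "(w, SOME x. x \<in> R `` {w}) \<in> R"
  using equiv_class_self[OF assms] by (metis Image_singleton_iff someI)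

definition amalg_map_right ::
  "('a, 'm) monoid_scheme \<Rightarrow> ('d, 'p) monoid_scheme \<Rightarrow> ('c, 'o) monoid_scheme
   \<Rightarrow> ('c \<Rightarrow> 'a) \<Rightarrow> ('c \<Rightarrow> 'd) \<Rightarrow> ('b \<Rightarrow> 'd) \<Rightarrow> ('a + 'b) list set \<Rightarrow> ('a + 'd) list set" where
  "amalg_map_right G H' K f g' h C = amalg_rel G H' K f g' `` (map_right h ` C)"

locale amalg_right_hom =
  fixes G :: "('a, 'm) monoid_scheme" and H :: "('b, 'n) monoid_scheme" and H' :: "('d, 'p) monoid_scheme"
    and K :: "('c, 'o) monoid_scheme" and f :: "'c \<Rightarrow> 'a" and g :: "'c \<Rightarrow> 'b" and g' :: "'c \<Rightarrow> 'd"
    and h :: "'b \<Rightarrow> 'd"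
  assumes groups: "group G" "group H" "group H'"
    and f: "f \<in> carrier K \<rightarrow> carrier G" and g: "g \<in> carrier K \<rightarrow> carrier H"
    and h: "h \<in> hom H H'" and hg: "\<forall>k\<in>carrier K. h (g k) = g' k"
begin

lemma g'_carrier: "g' \<in> carrier K \<rightarrow> carrier H'"
  using g h hg by (force simp: hom_def)

lemma rel_equiv: "equiv (amalg_words G H) (amalg_rel G H K f g)"
  and rel_equiv': "equiv (amalg_words G H') (amalg_rel G H' K f g')"
  using amalg_rel_equiv groups f g g'_carrier by blast+

lemma map_class:
  assumes "w \<in> amalg_words G H"
  shows "amalg_map_right G H' K f g' h (amalg_rel G H K f g `` {w}) = amalg_rel G H' K f g' `` {map_right h w}"
proof
  show "amalg_map_right G H' K f g' h (amalg_rel G H K f g `` {w}) \<subseteq> amalg_rel G H' K f g' `` {map_right h w}"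
    unfolding amalg_map_right_def
    using map_right_rel[OF groups h hg] by (blast intro: amalg_rel.rtrans)
  show "amalg_rel G H' K f g' `` {map_right h w} \<subseteq> amalg_map_right G H' K f g' h (amalg_rel G H K f g `` {w})"
    unfolding amalg_map_right_def using equiv_class_self[OF rel_equiv assms] by blast
qed

lemma map_hom: "amalg_map_right G H' K f g' h \<in> hom (amalg_prod G H K f g) (amalg_prod G H' K f g')"
proof (rule homI)
  let ?R = "amalg_rel G H K f g" and ?R' = "amalg_rel G H' K f g'" and ?F = "amalg_map_right G H' K f g' h"
  have hc: "h \<in> carrier H \<rightarrow> carrier H'" using h by (simp add: hom_def)
  fix C assume "C \<in> carrier (amalg_prod G H K f g)"
  then obtain w where w: "C = ?R `` {w}" "w \<in> amalg_words G H" by (auto simp: amalg_prod_def elim: quotientE)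
  show "?F C \<in> carrier (amalg_prod G H' K f g')"
    unfolding w(1) map_class[OF w(2)] using map_right_words[OF hc w(2)] by (simp add: amalg_prod_def quotientI)
next
  let ?R = "amalg_rel G H K f g" and ?R' = "amalg_rel G H' K f g'" and ?F = "amalg_map_right G H' K f g' h"
  have hc: "h \<in> carrier H \<rightarrow> carrier H'" using h by (simp add: hom_def)
  fix C D assume "C \<in> carrier (amalg_prod G H K f g)" "D \<in> carrier (amalg_prod G H K f g)"
  then obtain u v where uv: "C = ?R `` {u}" "u \<in> amalg_words G H" "D = ?R `` {v}" "v \<in> amalg_words G H"
    by (auto simp: amalg_prod_def elim!: quotientE)
  define x y where "x = (SOME x. x \<in> C)" and "y = (SOME y. y \<in> D)"
  have x: "(u, x) \<in> ?R" and y: "(v, y) \<in> ?R" unfolding x_def y_def uv using equiv_class_some[OF rel_equiv] uv by auto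
  have xy: "x \<in> amalg_words G H" "y \<in> amalg_words G H"
    using x y amalg_rel_in_words[OF groups(1,2) f g] by auto
  define x' y' where "x' = (SOME x. x \<in> ?F C)" and "y' = (SOME y. y \<in> ?F D)"
  have FC: "?F C = ?R' `` {map_right h u}" "?F D = ?R' `` {map_right h v}"
    using map_class uv by auto
  have "(map_right h u, x') \<in> ?R'" "(map_right h v, y') \<in> ?R'"
    unfolding x'_def y'_def FC using equiv_class_some[OF rel_equiv'] map_right_words[OF hc] uv(2,4) by auto
  then have "(map_right h x, x') \<in> ?R'" "(map_right h y, y') \<in> ?R'"
    using map_right_rel[OF groups h hg] x y by (meson amalg_rel.rsym amalg_rel.rtrans)+
  then have "(map_right h x @ map_right h y, x' @ y') \<in> ?R'"
    by (rule amalg_rel_append[OF groups(1,3) f g'_carrier])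
  moreover have "?F (C \<otimes>\<^bsub>amalg_prod G H K f g\<^esub> D) = ?R' `` {map_right h x @ map_right h y}"
    using map_class[of "x @ y"] xy unfolding x_def y_def by (simp add: amalg_prod_def)
  moreover have "?F C \<otimes>\<^bsub>amalg_prod G H' K f g'\<^esub> ?F D = ?R' `` {x' @ y'}"
    unfolding x'_def y'_def by (simp add: amalg_prod_def)
  ultimately show "?F (C \<otimes>\<^bsub>amalg_prod G H K f g\<^esub> D) = ?F C \<otimes>\<^bsub>amalg_prod G H' K f g'\<^esub> ?F D"
    using rel_equiv' by (simp add: equiv_class_eq_iff)
qed

end

lemma amalg_prod_iso_right:
  assumes G: "group G" and H: "group H" "group H'" and h: "h \<in> iso H H'"
    and f: "f \<in> carrier K \<rightarrow> carrier G" and g: "g \<in> carrier K \<rightarrow> carrier H"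
    and hg: "\<forall>k\<in>carrier K. h (g k) = g k"
  shows "amalg_prod G H K f g \<cong> amalg_prod G H' K f g"
proof -
  obtain h' where h': "group_isomorphisms H H' h h'"
    using h group.iso_iff_group_isomorphisms[OF H(1)] by blast
  then have hom: "h \<in> hom H H'" "h' \<in> hom H' H"
    and inv: "\<forall>x\<in>carrier H. h' (h x) = x" "\<forall>y\<in>carrier H'. h (h' y) = y"
    unfolding group_isomorphisms_def by auto
  have h'g: "\<forall>k\<in>carrier K. h' (g k) = g k" using hg inv(1) g by (metis PiE)
  interpret F: amalg_right_hom G H H' K f g g h using G H f g hom(1) hg by (simp add: amalg_right_hom_def)
  interpret F': amalg_right_hom G H' H K f g g h' using G H f F.g'_carrier hom(2) h'g by (simp add: amalg_right_hom_def)
  have "group_isomorphisms (amalg_prod G H K f g) (amalg_prod G H' K f g)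
      (amalg_map_right G H' K f g h) (amalg_map_right G H K f g h')"
    unfolding group_isomorphisms_def
  proof (intro conjI ballI F.map_hom F'.map_hom)
    fix C assume "C \<in> carrier (amalg_prod G H K f g)"
    then obtain w where w: "C = amalg_rel G H K f g `` {w}" "w \<in> amalg_words G H"
      by (auto simp: amalg_prod_def elim: quotientE)
    moreover have "map_right h w \<in> amalg_words G H'" "map_right h' (map_right h w) = w"
      using map_right_words[of h H H' w G] map_right_comp[of H h' h w G] hom(1) inv(1) w(2)
      by (auto simp: hom_def)
    ultimately show "amalg_map_right G H K f g h' (amalg_map_right G H' K f g h C) = C"
      using F.map_class F'.map_class by simp
  next
    fix C assume "C \<in> carrier (amalg_prod G H' K f g)"
    then obtain w where w: "C = amalg_rel G H' K f g `` {w}" "w \<in> amalg_words G H'"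
      by (auto simp: amalg_prod_def elim: quotientE)
    moreover have "map_right h' w \<in> amalg_words G H" "map_right h (map_right h' w) = w"
      using map_right_words[of h' H' H w G] map_right_comp[of H' h h' w G] hom(2) inv(2) w(2)
      by (auto simp: hom_def)
    ultimately show "amalg_map_right G H' K f g h (amalg_map_right G H K f g h' C) = C"
      using F.map_class F'.map_class by simp
  qed
  then show ?thesis unfolding is_iso_def using group_isomorphisms_imp_iso by blast
qed

lemma amalg_prod_iso_free_over:
  assumes G0: "group G0" and P: "comm_group P" and \<phi>: "\<phi> \<in> carrier A \<rightarrow> carrier G0"
    and D: "subgroup D P" "\<psi> ` carrier A \<subseteq> D" "D \<subseteq> B"
    and B: "subgroup B P" "free_over P D B r" and B': "subgroup B' P" "free_over P D B' r"
  shows "amalg_prod G0 (P\<lparr>carrier := B\<rparr>) A \<phi> \<psi> \<cong> amalg_prod G0 (P\<lparr>carrier := B'\<rparr>) A \<phi> \<psi>"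
proof -
  interpret P: comm_group P by (rule P)
  obtain h where h: "h \<in> iso (P\<lparr>carrier := B\<rparr>) (P\<lparr>carrier := B'\<rparr>)" "\<forall>d\<in>D. h d = d"
    using P.free_over_iso[OF D(1) B B'] by blast
  have "\<psi> \<in> carrier A \<rightarrow> carrier (P\<lparr>carrier := B\<rparr>)" using D(2,3) by auto
  moreover have "\<forall>k\<in>carrier A. h (\<psi> k) = \<psi> k" using D(2) h(2) by auto
  ultimately show ?thesis
    by (rule amalg_prod_iso_right[OF G0 P.subgroup_imp_group[OF B(1)] P.subgroup_imp_group[OF B'(1)] h(1) \<phi>])
qed

theorem corollary2p4:
  fixes G0 :: "('a, 'm) monoid_scheme" and P :: "('b, 'n) monoid_scheme"
    and A :: "('c, 'o) monoid_scheme"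
    and \<phi> :: "'c \<Rightarrow> 'a" and \<psi> :: "'c \<Rightarrow> 'b"
  assumes "group G0" and "comm_group P" and "group A"
    and "\<phi> \<in> hom A G0" and "inj_on \<phi> (carrier A)"
    and "\<psi> \<in> hom A P" and "inj_on \<psi> (carrier A)"
    and "\<exists>S. finite S \<and> S \<subseteq> carrier P \<and> generate P S = carrier P"
  shows "\<exists>F. finite F \<and> (\<forall>B\<in>F. subgroup B P \<and> \<psi> ` carrier A \<subseteq> B) \<and>
           (\<forall>B. subgroup B P \<and> \<psi> ` carrier A \<subseteq> B \<longrightarrow>
              (\<exists>B'\<in>F. amalg_prod G0 (P\<lparr>carrier := B\<rparr>) A \<phi> \<psi>
                         \<cong> amalg_prod G0 (P\<lparr>carrier := B'\<rparr>) A \<phi> \<psi>))"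
proof -
  interpret P: comm_group P by fact
  let ?K = "\<psi> ` carrier A" and ?C = "isolator P (\<psi> ` carrier A) (carrier P)"
  let ?S = "{B. subgroup B P \<and> ?K \<subseteq> B}" and ?Am = "\<lambda>B. amalg_prod G0 (P\<lparr>carrier := B\<rparr>) A \<phi> \<psi>"
  have K: "subgroup ?K P"
    using assms(3,6) by (intro group_hom.img_is_subgroup) (simp add: group_hom_def group_hom_axioms_def)
  have KC: "?K \<subseteq> ?C" using P.subset_isolator[of ?K "carrier P"] subgroup.subset[OF K] by blast
  have D: "subgroup (B \<inter> ?C) P" if "subgroup B P" for B
    using that by (intro P.subgroups_Inter_pair P.isolator_subgroup K P.subgroup_self)
  obtain S where "finite S" "S \<subseteq> carrier P" "generate P S = carrier P" using assms(8) by blast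
  then obtain s n where s: "\<And>i. i < n \<Longrightarrow> s i \<in> carrier P" and gen: "carrier P = adjoin_seq P {\<one>\<^bsub>P\<^esub>} s n"
    using P.generate_eq_adjoin_seq by (metis subsetD)
  let ?T = "{D. subgroup D P \<and> ?K \<subseteq> D \<and> D \<subseteq> ?C} \<times> {..n}"
  have "\<exists>F. finite F \<and> F \<subseteq> ?S \<and> (\<forall>B\<in>?S. \<exists>B'\<in>F. ?Am B \<cong> ?Am B')"
  proof (rule finite_representatives[where Q = "\<lambda>B t. fst t = B \<inter> ?C \<and> free_over P (fst t) B (snd t)"])
    show "finite ?T" using P.finite_subgroups_below_isolator[OF s gen K] by simp
    show "\<exists>t\<in>?T. fst t = B \<inter> ?C \<and> free_over P (fst t) B (snd t)" if "B \<in> ?S" for B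
      using that KC D P.free_over_inter_isolator[OF s gen K] by fastforce
    show "?Am B \<cong> ?Am B'" if "B \<in> ?S" "B' \<in> ?S" "fst t = B \<inter> ?C \<and> free_over P (fst t) B (snd t)"
        "fst t = B' \<inter> ?C \<and> free_over P (fst t) B' (snd t)" for B B' t
      using that KC D[of B] amalg_prod_iso_free_over[OF assms(1,2), of \<phi> A "fst t" \<psi> B "snd t" B'] assms(4)
      by (auto simp: hom_def)
  qed
  then show ?thesis by auto
qed

end
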